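(* Let $R$ be an integral domain which is a Hilbert ring. Then every maximal ideal of $R[X]$ is power stable. In particular, for a field $K$, every maximal ideal $M$ of $K[X_1,\dots,X_n]$ satisfies $M^t\cap K[X_1,\dots,X_{n-1}] = (M\cap K[X_1,\dots,X_{n-1}])^t$ for all $t\geq 1$.
   Context: A ring is a Hilbert ring if every prime ideal is an intersection of maximal ideals. An ideal $I$ of the polynomial ring $R[X]$ over an integral domain $R$ is called power stable if $I^t\cap R = (I\cap R)^t$ for all integers $t\geq 1$. *)

theory Defs
  imports "HOL-Computational_Algebra.Polynomial"
begin

definition is_ideal :: "'a::comm_ring_1 set \<Rightarrow> bool" where
  "is_ideal I \<longleftrightarrow> 0 \<in> I \<and> (\<forall>x\<in>I. \<forall>y\<in>I. x + y \<in> I) \<and> (\<forall>r. \<forall>x\<in>I. r * x \<in> I)"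

definition prime_ideal :: "'a::comm_ring_1 set \<Rightarrow> bool" where
  "prime_ideal P \<longleftrightarrow> is_ideal P \<and> P \<noteq> UNIV \<and> (\<forall>a b. a * b \<in> P \<longrightarrow> a \<in> P \<or> b \<in> P)"

definition maximal_ideal :: "'a::comm_ring_1 set \<Rightarrow> bool" where
  "maximal_ideal M \<longleftrightarrow> is_ideal M \<and> M \<noteq> UNIV \<and>
     (\<forall>J. is_ideal J \<and> M \<subseteq> J \<longrightarrow> J = M \<or> J = UNIV)"

definition hilbert_ring :: "'a::comm_ring_1 itself \<Rightarrow> bool" where
  "hilbert_ring _ \<longleftrightarrow> (\<forall>P::'a set. prime_ideal P \<longrightarrow>
      (\<exists>\<M>. (\<forall>M\<in>\<M>. maximal_ideal M) \<and> P = \<Inter>\<M>))"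

definition ideal_gen :: "'a::comm_ring_1 set \<Rightarrow> 'a set" where
  "ideal_gen S = \<Inter>{I. is_ideal I \<and> S \<subseteq> I}"

definition ideal_prod :: "'a::comm_ring_1 set \<Rightarrow> 'a set \<Rightarrow> 'a set" where
  "ideal_prod I J = ideal_gen {a * b | a b. a \<in> I \<and> b \<in> J}"

primrec ideal_pow :: "'a::comm_ring_1 set \<Rightarrow> nat \<Rightarrow> 'a set" where
  "ideal_pow I 0 = UNIV"
| "ideal_pow I (Suc n) = ideal_prod I (ideal_pow I n)"

definition contract :: "'a::comm_ring_1 poly set \<Rightarrow> 'a set" where
  "contract I = {a. [:a:] \<in> I}"

definition power_stable :: "'a::idom poly set \<Rightarrow> bool" where
  "power_stable I \<longleftrightarrow> (\<forall>t::nat. t \<ge> 1 \<longrightarrow> contract (ideal_pow I t) = ideal_pow (contract I) t)"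

end

theory Submission
  imports Defs
begin

(*
  Let R be a Hilbert domain, M a maximal ideal of R[X] and P = M \<inter> R its contraction.
  The inclusion P^t \<subseteq> M^t \<inter> R holds for every ideal M of R[X], so power stability
  of M amounts to the reverse inclusion.

  (1) P is maximal.  P is prime; choose g \<in> M of least degree whose leading
      coefficient a lies outside P (below that degree, elements of M have all
      coefficients in P).  Pseudo-dividing a Bezout relation 1 = x + h b (x \<in> M)
      by g shows that for every b \<notin> P some power of a lies in P + bR.  Writing P
      as an intersection of maximal ideals (Hilbert property), either P is one of
      them or a lies in every one of them, hence in P, which is impossible.
  (2) As P is maximal, a is invertible modulo P; this turns g into a monic f \<in> M
      of positive degree with M \<subseteq> P[X] + (f).  Then M^t \<subseteq> P^t[X] + (f),
      and division by the monic f shows that a constant in P^t[X] + (f) lies in P^t.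
*)

lemma ideal_0: "is_ideal I \<Longrightarrow> 0 \<in> I"
  by (simp add: is_ideal_def)

lemma ideal_add: "is_ideal I \<Longrightarrow> x \<in> I \<Longrightarrow> y \<in> I \<Longrightarrow> x + y \<in> I"
  by (simp add: is_ideal_def)

lemma ideal_multL: "is_ideal I \<Longrightarrow> x \<in> I \<Longrightarrow> r * x \<in> I"
  by (simp add: is_ideal_def)

lemma ideal_multR: "is_ideal I \<Longrightarrow> x \<in> I \<Longrightarrow> x * r \<in> I"
  by (metis ideal_multL mult.commute)

lemma ideal_neg: "is_ideal I \<Longrightarrow> x \<in> I \<Longrightarrow> - x \<in> I"
  using ideal_multL[of I x "-1"] by simp

lemma ideal_diff: "is_ideal I \<Longrightarrow> x \<in> I \<Longrightarrow> y \<in> I \<Longrightarrow> x - y \<in> I"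
  using ideal_add[of I x "-y"] ideal_neg[of I y] by simp

lemma ideal_sum: "is_ideal I \<Longrightarrow> (\<And>i. i \<in> A \<Longrightarrow> f i \<in> I) \<Longrightarrow> sum f A \<in> I"
  by (induction A rule: infinite_finite_induct) (auto intro: ideal_0 ideal_add)

lemma ideal_UNIV: "is_ideal UNIV"
  by (simp add: is_ideal_def)

lemma ideal_eq_UNIV_if_one: "is_ideal I \<Longrightarrow> 1 \<in> I \<Longrightarrow> I = UNIV"
  using ideal_multR[of I 1] by auto

lemma ideal_gen_ideal: "is_ideal (ideal_gen S)"
  unfolding ideal_gen_def is_ideal_def by auto

lemma ideal_gen_least: "is_ideal I \<Longrightarrow> S \<subseteq> I \<Longrightarrow> ideal_gen S \<subseteq> I"
  unfolding ideal_gen_def by auto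

lemma ideal_prod_mem: "a \<in> I \<Longrightarrow> b \<in> J \<Longrightarrow> a * b \<in> ideal_prod I J"
  unfolding ideal_prod_def ideal_gen_def by blast

lemma ideal_pow_ideal: "is_ideal (ideal_pow I t)"
  by (cases t) (simp_all add: ideal_prod_def ideal_gen_ideal ideal_UNIV)

definition ideal_plus_principal :: "'a::comm_ring_1 set \<Rightarrow> 'a \<Rightarrow> 'a set" where
  "ideal_plus_principal I a = {x + r * a | x r. x \<in> I}"

lemma ideal_plus_principal_ideal:
  assumes I: "is_ideal I"
  shows "is_ideal (ideal_plus_principal I a)"
  unfolding is_ideal_def ideal_plus_principal_def
proof (intro conjI ballI allI)
  show "0 \<in> {x + r * a |x r. x \<in> I}"
    using ideal_0[OF I] by (intro CollectI exI[of _ 0]) auto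
next
  fix y z assume "y \<in> {x + r * a |x r. x \<in> I}" "z \<in> {x + r * a |x r. x \<in> I}"
  then obtain x1 r1 x2 r2 where "y = x1 + r1 * a" "z = x2 + r2 * a" "x1 \<in> I" "x2 \<in> I"
    by auto
  then show "y + z \<in> {x + r * a |x r. x \<in> I}"
    by (intro CollectI exI[of _ "x1 + x2"] exI[of _ "r1 + r2"])
      (auto simp: algebra_simps ideal_add[OF I])
next
  fix s y assume "y \<in> {x + r * a |x r. x \<in> I}"
  then obtain x1 r1 where "y = x1 + r1 * a" "x1 \<in> I" by auto
  then show "s * y \<in> {x + r * a |x r. x \<in> I}"
    by (intro CollectI exI[of _ "s * x1"] exI[of _ "s * r1"])
      (auto simp: algebra_simps ideal_multL[OF I])
qed

lemma maximal_comaximal: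
  assumes max: "maximal_ideal M" and a: "a \<notin> M"
  shows "\<exists>x\<in>M. \<exists>r. x + r * a = 1"
proof -
  have I: "is_ideal M" using max by (simp add: maximal_ideal_def)
  have "M \<subseteq> ideal_plus_principal M a"
    unfolding ideal_plus_principal_def by (force intro: exI[of _ 0])
  moreover have "a \<in> ideal_plus_principal M a"
    unfolding ideal_plus_principal_def using ideal_0[OF I] by (force intro: exI[of _ 1])
  ultimately have "ideal_plus_principal M a = UNIV"
    using max a ideal_plus_principal_ideal[OF I] unfolding maximal_ideal_def by blast
  then have "1 \<in> ideal_plus_principal M a" by simp
  then show ?thesis unfolding ideal_plus_principal_def by fastforce
qed

lemma maximal_prime:
  assumes max: "maximal_ideal M"
  shows "prime_ideal M"
proof -
  have I: "is_ideal M" using max by (simp add: maximal_ideal_def)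
  have "a \<in> M \<or> b \<in> M" if ab: "a * b \<in> M" for a b
  proof (rule disjCI)
    assume "b \<notin> M"
    then obtain x r where x: "x \<in> M" "x + r * b = 1" using maximal_comaximal[OF max] by blast
    then have "a = a * x + r * (a * b)" by (metis distrib_left mult.left_commute mult_1_right)
    moreover have "a * x + r * (a * b) \<in> M" using I x ab by (simp add: ideal_add ideal_multL ideal_multR)
    ultimately show "a \<in> M" by simp
  qed
  then show ?thesis using max by (simp add: prime_ideal_def maximal_ideal_def)
qed

lemma prime_ideal_power: "prime_ideal N \<Longrightarrow> a ^ k \<in> N \<Longrightarrow> a \<in> N"
proof (induction k)
  case 0 then show ?case using ideal_eq_UNIV_if_one[of N] by (simp add: prime_ideal_def)
next
  case (Suc k) then show ?case by (simp add: prime_ideal_def) blast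
qed

definition poly_over :: "'a::comm_ring_1 set \<Rightarrow> 'a poly set" where
  "poly_over I = {p. \<forall>i. coeff p i \<in> I}"

lemma poly_over_ideal:
  assumes "is_ideal I"
  shows "is_ideal (poly_over I)"
  unfolding is_ideal_def poly_over_def using assms
  by (auto simp: coeff_mult intro!: ideal_sum ideal_multL ideal_add ideal_0)

lemma poly_over_mult: "p \<in> poly_over I \<Longrightarrow> q \<in> poly_over J \<Longrightarrow> p * q \<in> poly_over (ideal_prod I J)"
  unfolding poly_over_def ideal_prod_def
  by (auto simp: coeff_mult intro!: ideal_sum[OF ideal_gen_ideal] ideal_prod_mem[unfolded ideal_prod_def])

lemma poly_over_UNIV: "poly_over UNIV = UNIV"
  by (simp add: poly_over_def)

lemma contract_ideal:
  assumes I: "is_ideal M"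
  shows "is_ideal (contract M)"
  unfolding is_ideal_def contract_def
proof (intro conjI ballI allI; simp)
  show "0 \<in> M" using I by (rule ideal_0)
next
  fix x y assume "[:x:] \<in> M" "[:y:] \<in> M"
  then show "[:x + y:] \<in> M" using ideal_add[OF I, of "[:x:]" "[:y:]"] by simp
next
  fix r x assume "[:x:] \<in> M"
  then show "[:r * x:] \<in> M" using ideal_multL[OF I, of "[:x:]" "[:r:]"] by (simp add: mult.commute)
qed

lemma contract_prime:
  fixes M :: "'a::comm_ring_1 poly set"
  assumes prime: "prime_ideal M"
  shows "prime_ideal (contract M)"
proof -
  have I: "is_ideal M" and proper: "M \<noteq> UNIV" using prime by (auto simp: prime_ideal_def)
  have "1 \<notin> contract M" using proper ideal_eq_UNIV_if_one[OF I] by (auto simp: contract_def one_pCons)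
  moreover have "a \<in> contract M \<or> b \<in> contract M" if "a * b \<in> contract M" for a b
  proof -
    have "[:a:] * [:b:] \<in> M" using that by (simp add: contract_def mult.commute)
    then show ?thesis using prime by (auto simp: prime_ideal_def contract_def)
  qed
  ultimately show ?thesis using contract_ideal[OF I] by (auto simp: prime_ideal_def)
qed

lemma monom_mem: "is_ideal M \<Longrightarrow> c \<in> contract M \<Longrightarrow> monom c n \<in> M"
  using ideal_multR[of M "[:c:]" "monom 1 n"] by (simp add: contract_def smult_monom)

lemma contract_power_lower: "ideal_pow (contract M) t \<subseteq> contract (ideal_pow M t)"
proof (induction t)
  case 0 show ?case by (simp add: contract_def)
next
  case (Suc t)
  have "{a * b |a b. a \<in> contract M \<and> b \<in> ideal_pow (contract M) t} \<subseteq> contract (ideal_pow M (Suc t))"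
  proof clarify
    fix a b assume "a \<in> contract M" "b \<in> ideal_pow (contract M) t"
    then have "[:a:] \<in> M" "[:b:] \<in> ideal_pow M t" using Suc by (auto simp: contract_def)
    then have "[:a:] * [:b:] \<in> ideal_pow M (Suc t)" by (simp only: ideal_pow.simps ideal_prod_mem)
    then show "a * b \<in> contract (ideal_pow M (Suc t))" by (simp add: contract_def mult.commute)
  qed
  then show ?case
    using ideal_gen_least[OF contract_ideal[OF ideal_gen_ideal]] by (simp add: ideal_prod_def)
qed

section \<open>An element of least degree escaping from P[X]\<close>

definition least_escape :: "'a::comm_ring_1 poly set \<Rightarrow> 'a poly \<Rightarrow> bool" where
  "least_escape M g \<longleftrightarrow> g \<in> M \<and> lead_coeff g \<notin> contract M \<and>
     (\<forall>h\<in>M. degree h < degree g \<longrightarrow> h \<in> poly_over (contract M))"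

text \<open>An element of M outside P[X] can be reduced, by removing leading terms in P,
  to an element of no larger degree with leading coefficient outside P.\<close>
lemma escape_lead_coeff:
  assumes I: "is_ideal M"
  shows "h \<in> M \<Longrightarrow> h \<notin> poly_over (contract M) \<Longrightarrow>
    \<exists>g\<in>M. lead_coeff g \<notin> contract M \<and> degree g \<le> degree h"
proof (induction "degree h" arbitrary: h rule: less_induct)
  case less
  show ?case
  proof (cases "lead_coeff h \<in> contract M")
    case False then show ?thesis using less.prems by auto
  next
    case True
    define h' where "h' = h - monom (lead_coeff h) (degree h)"
    have "h' \<in> M" using I less.prems(1) True by (simp add: h'_def ideal_diff monom_mem)
    have coeff_h': "coeff h' i = (if i = degree h then 0 else coeff h i)" for i
      by (simp add: h'_def)
    have coeffs_h: "coeff h i \<in> contract M" if "h' \<in> poly_over (contract M)" for i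
    proof -
      have "coeff h' i \<in> contract M" using that by (simp add: poly_over_def)
      then show ?thesis using True coeff_h'[of i] by (cases "i = degree h") auto
    qed
    then have "h' \<notin> poly_over (contract M)" using less.prems(2) by (auto simp: poly_over_def)
    moreover have "degree h \<noteq> 0"
    proof
      assume "degree h = 0"
      then have "coeff h i \<in> contract M" for i
        using True ideal_0[OF contract_ideal[OF I]] coeff_eq_0[of h i] by (cases "i = 0") auto
      then show False using less.prems(2) by (simp add: poly_over_def)
    qed
    moreover have "degree h' \<le> degree h - 1"
      by (rule degree_le) (auto simp: coeff_h' coeff_eq_0)
    ultimately show ?thesis using less.hyps[of h'] \<open>h' \<in> M\<close> by fastforce
  qed
qed

text \<open>For a maximal ideal M, M \<noteq> P[X]: otherwise X or a Bezout partner of X would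
  put 1 into P.\<close>
lemma maximal_not_poly_over_contract:
  fixes M :: "'a::comm_ring_1 poly set"
  assumes max: "maximal_ideal M"
  shows "\<exists>h\<in>M. h \<notin> poly_over (contract M)"
proof (rule ccontr)
  assume "\<not> ?thesis"
  then have coeffs: "\<And>h i. h \<in> M \<Longrightarrow> coeff h i \<in> contract M" unfolding poly_over_def by blast
  have I: "is_ideal M" and proper: "M \<noteq> UNIV" using max by (auto simp: maximal_ideal_def)
  have one: "1 \<notin> contract M" using proper ideal_eq_UNIV_if_one[OF I] by (auto simp: contract_def one_pCons)
  show False
  proof (cases "[:0,1:] \<in> M")
    case True
    from coeffs[OF True, of 1] one show False by simp
  next
    case False
    from maximal_comaximal[OF max False] obtain x r where "x \<in> M" "x + r * [:0,1:] = 1" by blast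
    then have "coeff (x + r * [:0,1:]) 0 = 1" by simp
    then have "coeff x 0 = 1" by (simp add: mult_pCons_right)
    with coeffs[OF \<open>x \<in> M\<close>, of 0] one show False by simp
  qed
qed

lemma least_escape_exists:
  fixes M :: "'a::comm_ring_1 poly set"
  assumes max: "maximal_ideal M"
  shows "\<exists>g. least_escape M g"
proof -
  have I: "is_ideal M" using max by (simp add: maximal_ideal_def)
  obtain g0 where "g0 \<in> M \<and> lead_coeff g0 \<notin> contract M"
    using maximal_not_poly_over_contract[OF max] escape_lead_coeff[OF I] by blast
  from ex_has_least_nat[of "\<lambda>g. g \<in> M \<and> lead_coeff g \<notin> contract M", OF this, of degree]
  obtain g where g: "g \<in> M" "lead_coeff g \<notin> contract M"
    and least: "\<And>g'. g' \<in> M \<and> lead_coeff g' \<notin> contract M \<Longrightarrow> degree g \<le> degree g'" by blast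
  have "h \<in> poly_over (contract M)" if "h \<in> M" "degree h < degree g" for h
    using escape_lead_coeff[OF I that(1)] least that(2) by (meson leD le_trans)
  then show ?thesis using g unfolding least_escape_def by blast
qed

lemma least_escape_degree:
  assumes "least_escape M g"
  shows "degree g \<ge> 1"
proof (rule ccontr)
  assume "\<not> degree g \<ge> 1"
  then have "degree g = 0" by simp
  then have "g = [:lead_coeff g:]" by (simp add: degree_0_id)
  moreover have "g \<in> M" "lead_coeff g \<notin> contract M" using assms by (auto simp: least_escape_def)
  ultimately show False unfolding contract_def by (metis mem_Collect_eq)
qed

section \<open>The contraction of a maximal ideal of R[X] is maximal when R is Hilbert\<close>

text \<open>Pseudo-division by g of the Bezout
  partner of b produces an element of M of degree below that of g, whose constant
  term is exactly lead_coeff g ^ k - b c.\<close>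
lemma least_escape_lead_power:
  fixes M :: "'a::comm_ring_1 poly set"
  assumes max: "maximal_ideal M" and g: "least_escape M g" and b: "b \<notin> contract M"
  shows "\<exists>k c. lead_coeff g ^ k - b * c \<in> contract M"
proof -
  have I: "is_ideal M" using max by (simp add: maximal_ideal_def)
  have gM: "g \<in> M" and low: "\<forall>h\<in>M. degree h < degree g \<longrightarrow> h \<in> poly_over (contract M)"
    using g by (auto simp: least_escape_def)
  have deg_g: "degree g \<ge> 1" by (rule least_escape_degree[OF g])
  then have "g \<noteq> 0" by auto
  have "[:b:] \<notin> M" using b by (simp add: contract_def)
  from maximal_comaximal[OF max this] obtain x h where x: "x \<in> M" "x + h * [:b:] = 1" by blast
  obtain q r where qr: "pseudo_divmod h g = (q, r)" by (cases "pseudo_divmod h g") auto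
  define a where "a = lead_coeff g"
  define k where "k = Suc (degree h) - degree g"
  have division: "smult (a ^ k) h = g * q + r"
    using pseudo_divmod(1)[OF \<open>g \<noteq> 0\<close> qr] by (simp add: a_def k_def)
  have deg_r: "degree r < degree g"
    using pseudo_divmod(2)[OF \<open>g \<noteq> 0\<close> qr] deg_g by auto
  define e where "e = [:a ^ k:] - [:b:] * r"
  have "e = [:a ^ k:] * (x + h * [:b:]) - [:b:] * r" using x(2) by (simp add: e_def)
  also have "\<dots> = [:a ^ k:] * x + [:b:] * (smult (a ^ k) h - r)"
    by (simp add: algebra_simps smult_add_right)
  also have "\<dots> = [:a ^ k:] * x + ([:b:] * q) * g" by (simp add: division algebra_simps)
  finally have "e \<in> M" using x(1) gM by (simp only: ideal_add[OF I] ideal_multL[OF I])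
  moreover have "degree e < degree g"
  proof -
    have "degree ([:b:] * r) \<le> degree r" using degree_mult_le[of "[:b:]" r] by simp
    then have "degree e \<le> degree g - 1" unfolding e_def using deg_r by (intro degree_diff_le) auto
    then show ?thesis using deg_g by simp
  qed
  ultimately have "coeff e 0 \<in> contract M" using low by (simp add: poly_over_def)
  then show ?thesis by (auto simp: e_def a_def)
qed

text \<open>Any maximal ideal N strictly containing P contains the leading coefficient of a
  least escaping element: some power of it lies in P + bN \<subseteq> N, and N is prime.\<close>
lemma least_escape_lead_in_larger_maximal:
  fixes M :: "'a::comm_ring_1 poly set"
  assumes max: "maximal_ideal M" and g: "least_escape M g"
    and N: "maximal_ideal N" "contract M \<subset> N"
  shows "lead_coeff g \<in> N"
proof -
  obtain b where b: "b \<in> N" "b \<notin> contract M" using N(2) by blast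
  from least_escape_lead_power[OF max g b(2)] obtain k c
    where kc: "lead_coeff g ^ k - b * c \<in> contract M" by blast
  have I: "is_ideal N" using N(1) by (simp add: maximal_ideal_def)
  have "(lead_coeff g ^ k - b * c) + b * c \<in> N"
    using kc N(2) b(1) by (blast intro: ideal_add[OF I] ideal_multR[OF I])
  then have "lead_coeff g ^ k \<in> N" by simp
  then show ?thesis by (rule prime_ideal_power[OF maximal_prime[OF N(1)]])
qed

lemma contract_maximal:
  fixes M :: "'a::comm_ring_1 poly set"
  assumes hilbert: "hilbert_ring TYPE('a)" and max: "maximal_ideal M"
  shows "maximal_ideal (contract M)"
proof -
  obtain g where g: "least_escape M g" using least_escape_exists[OF max] by blast
  have "prime_ideal (contract M)" by (rule contract_prime[OF maximal_prime[OF max]])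
  from hilbert[unfolded hilbert_ring_def, rule_format, OF this]
  obtain \<M> where \<M>: "\<forall>N\<in>\<M>. maximal_ideal N" "contract M = \<Inter>\<M>" by blast
  show ?thesis
  proof (cases "contract M \<in> \<M>")
    case True then show ?thesis using \<M>(1) by blast
  next
    case False
    have "lead_coeff g \<in> N" if N: "N \<in> \<M>" for N
    proof (rule least_escape_lead_in_larger_maximal[OF max g])
      show "maximal_ideal N" using \<M>(1) N by blast
      have "contract M \<subseteq> N" unfolding \<M>(2) using N by (rule Inter_lower)
      moreover have "contract M \<noteq> N" using False N by blast
      ultimately show "contract M \<subset> N" by blast
    qed
    then have "lead_coeff g \<in> contract M" unfolding \<M>(2) by blast
    then show ?thesis using g by (simp add: least_escape_def)
  qed
qed

section \<open>Division by a monic polynomial and powers of M\<close>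

text \<open>Division with remainder by a monic f of positive degree stays inside I[X]: the
  leading term of p is cancelled by a multiple of f with a coefficient from I.\<close>
lemma monic_division:
  fixes f :: "'a::comm_ring_1 poly"
  assumes f: "lead_coeff f = 1" "degree f \<ge> 1" and I: "is_ideal I"
  shows "p \<in> poly_over I \<Longrightarrow> \<exists>s r. p = f * s + r \<and> r \<in> poly_over I \<and> degree r < degree f"
proof (induction "degree p" arbitrary: p rule: less_induct)
  case less
  show ?case
  proof (cases "degree p < degree f")
    case True then show ?thesis using less.prems by (intro exI[of _ 0] exI[of _ p]) simp
  next
    case False
    define c where "c = lead_coeff p"
    define k where "k = degree p - degree f"
    define p' where "p' = p - monom c k * f"
    have "c \<in> I" using less.prems by (simp add: poly_over_def c_def)
    then have "monom c k * f \<in> poly_over I"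
      using I by (auto simp: poly_over_def coeff_monom_mult intro: ideal_multR ideal_0)
    then have p'_over: "p' \<in> poly_over I"
      unfolding p'_def using less.prems by (intro ideal_diff[OF poly_over_ideal[OF I]])
    have "degree p' \<le> degree p - 1"
    proof (rule degree_le, intro allI impI)
      fix i assume i: "i > degree p - 1"
      show "coeff p' i = 0"
      proof (cases "i = degree p")
        case True
        then have "i - k = degree f" using False by (simp add: k_def)
        then show ?thesis using True False f by (simp add: p'_def coeff_monom_mult c_def k_def)
      next
        case i_ne: False
        then have "i > degree p" "i - k > degree f" using i False f(2) by (auto simp: k_def)
        then show ?thesis by (simp add: p'_def coeff_monom_mult coeff_eq_0)
      qed
    qed
    then have "degree p' < degree p" using False f(2) by simp
    from less.hyps[OF this p'_over] obtain s r
      where sr: "p' = f * s + r" "r \<in> poly_over I" "degree r < degree f" by blast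
    have "p = f * (s + monom c k) + r" using sr(1) by (simp add: p'_def algebra_simps)
    then show ?thesis using sr by blast
  qed
qed

text \<open>Part (2a): if P = M \<inter> R is maximal, making the leading coefficient of a least
  escaping g invertible modulo P yields a monic f \<in> M with M \<subseteq> P[X] + (f).\<close>
lemma monic_generator:
  fixes M :: "'a::comm_ring_1 poly set"
  assumes max: "maximal_ideal M" and max_contract: "maximal_ideal (contract M)"
  shows "\<exists>f\<in>M. lead_coeff f = 1 \<and> degree f \<ge> 1 \<and>
           M \<subseteq> ideal_plus_principal (poly_over (contract M)) f"
proof -
  have I: "is_ideal M" using max by (simp add: maximal_ideal_def)
  obtain g where g: "least_escape M g" using least_escape_exists[OF max] by blast
  then have gM: "g \<in> M" and lead_g: "lead_coeff g \<notin> contract M"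
    and low: "\<forall>h\<in>M. degree h < degree g \<longrightarrow> h \<in> poly_over (contract M)"
    by (auto simp: least_escape_def)
  define d where "d = degree g"
  have d: "d \<ge> 1" unfolding d_def by (rule least_escape_degree[OF g])
  obtain x u where xu: "x \<in> contract M" "x + u * lead_coeff g = 1"
    using maximal_comaximal[OF max_contract lead_g] by blast
  define f where "f = smult u g + monom x d"
  have "smult u g = [:u:] * g" by simp
  then have "f \<in> M" unfolding f_def
    using gM monom_mem[OF I xu(1)] by (metis ideal_add[OF I] ideal_multL[OF I])
  have coeff_f: "coeff f d = 1" using xu(2) by (simp add: f_def d_def algebra_simps)
  have "degree f \<le> d" unfolding f_def d_def
    by (intro degree_add_le order.trans[OF degree_smult_le]) (auto simp: degree_monom_le)
  moreover have "d \<le> degree f" using coeff_f by (intro le_degree) simp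
  ultimately have deg_f: "degree f = d" by simp
  then have lead_f: "lead_coeff f = 1" using coeff_f by simp
  have "h \<in> ideal_plus_principal (poly_over (contract M)) f" if h: "h \<in> M" for h
  proof -
    obtain s r where sr: "h = f * s + r" "degree r < d"
      using monic_division[OF lead_f _ ideal_UNIV, of h] d deg_f by (auto simp: poly_over_UNIV)
    have "r = h - s * f" using sr(1) by (simp add: algebra_simps)
    then have "r \<in> M" using h \<open>f \<in> M\<close> by (simp add: ideal_diff[OF I] ideal_multL[OF I])
    then have "r \<in> poly_over (contract M)" using low sr(2) by (simp add: d_def)
    then show ?thesis using sr(1) unfolding ideal_plus_principal_def by (force simp: algebra_simps)
  qed
  then show ?thesis using \<open>f \<in> M\<close> lead_f d deg_f by blast
qed

text \<open>Part (2b): M \<subseteq> P[X] + (f) propagates to M^t \<subseteq> P^t[X] + (f), because the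
  product of two elements of the right-hand sides lands in P^(t+1)[X] + (f).\<close>
lemma power_in_plus_principal:
  assumes "M \<subseteq> ideal_plus_principal (poly_over P) f"
  shows "ideal_pow M t \<subseteq> ideal_plus_principal (poly_over (ideal_pow P t)) f"
proof (induction t)
  case 0
  show ?case unfolding ideal_plus_principal_def by (force simp: poly_over_UNIV intro: exI[of _ 0])
next
  case (Suc t)
  have "y * w \<in> ideal_plus_principal (poly_over (ideal_pow P (Suc t))) f"
    if "y \<in> M" "w \<in> ideal_pow M t" for y w
  proof -
    obtain p1 q1 where 1: "y = p1 + q1 * f" "p1 \<in> poly_over P"
      using assms \<open>y \<in> M\<close> unfolding ideal_plus_principal_def by blast
    obtain p2 q2 where 2: "w = p2 + q2 * f" "p2 \<in> poly_over (ideal_pow P t)"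
      using Suc \<open>w \<in> ideal_pow M t\<close> unfolding ideal_plus_principal_def by blast
    have "p1 * p2 \<in> poly_over (ideal_pow P (Suc t))" using poly_over_mult[OF 1(2) 2(2)] by simp
    moreover have "y * w = p1 * p2 + (q1 * p2 + p1 * q2 + q1 * q2 * f) * f"
      using 1(1) 2(1) by (simp add: algebra_simps)
    ultimately show ?thesis unfolding ideal_plus_principal_def by blast
  qed
  then show ?case unfolding ideal_pow.simps(2) ideal_prod_def
    by (intro ideal_gen_least ideal_plus_principal_ideal poly_over_ideal ideal_gen_ideal) blast
qed

text \<open>Part (2c): a constant in J[X] + (f), f monic of positive degree, lies in J.
  Reducing modulo f gives c = r + f s with r \<in> J[X] of degree below that of f,
  which forces s = 0 since f is monic.\<close>
lemma const_in_plus_principal_monic: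
  fixes f :: "'a::comm_ring_1 poly"
  assumes f: "lead_coeff f = 1" "degree f \<ge> 1" and J: "is_ideal J"
    and c: "[:c:] \<in> ideal_plus_principal (poly_over J) f"
  shows "c \<in> J"
proof -
  obtain p q where pq: "[:c:] = p + q * f" "p \<in> poly_over J"
    using c unfolding ideal_plus_principal_def by blast
  obtain s r where sr: "p = f * s + r" "r \<in> poly_over J" "degree r < degree f"
    using monic_division[OF f J pq(2)] by blast
  have eq: "[:c:] - r = f * (q + s)" using pq(1) sr(1) by (simp add: algebra_simps)
  have "q + s = 0"
  proof (rule ccontr)
    assume "q + s \<noteq> 0"
    then have "coeff (f * (q + s)) (degree f + degree (q + s)) \<noteq> 0"
      using f(1) by (metis coeff_mult_degree_sum leading_coeff_0_iff mult_1_left)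
    then have "degree f \<le> degree (f * (q + s))" by (metis le_add1 le_degree order_trans)
    moreover have "degree ([:c:] - r) < degree f" using sr(3) f(2) by (intro le_less_trans[OF degree_diff_le]) auto
    ultimately show False using eq by simp
  qed
  then have "r = [:c:]" using eq by simp
  then show ?thesis using sr(2) by (metis coeff_pCons_0 mem_Collect_eq poly_over_def)
qed

theorem mainTheorem14:
  assumes "hilbert_ring TYPE('a::idom)"
  shows "\<forall>M :: 'a poly set. maximal_ideal M \<longrightarrow> power_stable M"
proof (intro allI impI)
  fix M :: "'a poly set"
  assume max: "maximal_ideal M"
  let ?P = "contract M"
  obtain f where f: "lead_coeff f = 1" "degree f \<ge> 1"
    and M_sub: "M \<subseteq> ideal_plus_principal (poly_over ?P) f"
    using monic_generator[OF max contract_maximal[OF assms max]] by blast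
  have "contract (ideal_pow M t) \<subseteq> ideal_pow ?P t" for t
  proof
    fix c assume "c \<in> contract (ideal_pow M t)"
    then have "[:c:] \<in> ideal_plus_principal (poly_over (ideal_pow ?P t)) f"
      using power_in_plus_principal[OF M_sub] by (auto simp: contract_def)
    then show "c \<in> ideal_pow ?P t" by (rule const_in_plus_principal_monic[OF f ideal_pow_ideal])
  qed
  then show "power_stable M" unfolding power_stable_def using contract_power_lower[of M] by blast
qed

end
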